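(* Let $X$ be a weakly connected digraph. Then for every $k\in\mathbb{N}$, $\lambda_1(H_k(X))\le\rho(H_k(X))\le3\lambda_1(H_k(X))$, where $\lambda_1(H_k(X))$ is the largest eigenvalue of $H_k(X)$.
   Context: A digraph $X$ has vertex set $\{v_1,\dots,v_n\}$ and a set of directed edges $\overrightarrow{e_{st}}$ (no loops); a pair with both $\overrightarrow{e_{st}}$ and $\overrightarrow{e_{ts}}$ is a digon. The underlying graph $\Gamma(X)$ is the simple graph with $v_s\sim v_t$ iff at least one of $\overrightarrow{e_{st}},\overrightarrow{e_{ts}}$ is in $X$; $X$ is weakly connected if $\Gamma(X)$ is connected. For $k\in\mathbb{N}$, the $k$-generalized Hermitian adjacency matrix $H_k(X)$ has $(s,t)$ entry $1$ if both $\overrightarrow{e_{st}},\overrightarrow{e_{ts}}\in E(X)$; $e^{i\pi/(k+1)}$ if $\overrightarrow{e_{st}}\in E(X)$ and $\overrightarrow{e_{ts}}\notin E(X)$; $e^{-i\pi/(k+1)}$ if $\overrightarrow{e_{st}}\notin E(X)$ and $\overrightarrow{e_{ts}}\in E(X)$; and $0$ otherwise. $\rho$ is the spectral radius. *)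

theory Defs
  imports "Jordan_Normal_Form.Spectral_Radius"
begin

text \<open>A digraph X on vertex set {0..<n} is given by its arc relation E :: nat => nat => bool,
  where E s t means the arc from v_s to v_t is present.\<close>

definition digraph :: "nat \<Rightarrow> (nat \<Rightarrow> nat \<Rightarrow> bool) \<Rightarrow> bool" where
  "digraph n E \<longleftrightarrow> (\<forall>s t. E s t \<longrightarrow> s < n \<and> t < n) \<and> (\<forall>s. \<not> E s s)"

definition underlying_adj :: "(nat \<Rightarrow> nat \<Rightarrow> bool) \<Rightarrow> nat \<Rightarrow> nat \<Rightarrow> bool" where
  "underlying_adj E s t \<longleftrightarrow> s \<noteq> t \<and> (E s t \<or> E t s)"

definition weakly_connected :: "nat \<Rightarrow> (nat \<Rightarrow> nat \<Rightarrow> bool) \<Rightarrow> bool" where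
  "weakly_connected n E \<longleftrightarrow> 0 < n \<and>
     (\<forall>s<n. \<forall>t<n. (underlying_adj E)\<^sup>*\<^sup>* s t)"

definition herm_adj_k :: "nat \<Rightarrow> nat \<Rightarrow> (nat \<Rightarrow> nat \<Rightarrow> bool) \<Rightarrow> complex mat" where
  "herm_adj_k k n E = mat n n (\<lambda>(s, t).
     if E s t \<and> E t s then 1
     else if E s t then cis (pi / real (k + 1))
     else if E t s then cis (- pi / real (k + 1))
     else 0)"

definition lambda1 :: "complex mat \<Rightarrow> real" where
  "lambda1 A = Max {x :: real. eigenvalue A (complex_of_real x)}"

end

theory Submission
  imports Defs "HOL-Analysis.Function_Topology" "HOL-Analysis.Topology_Euclidean_Space"
begin

(*
  H = H_k(X) is Hermitian, and for k >= 1 its nonzero entries are 1 or exp(+-i pi/(k+1)), so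
  all entries have nonnegative real part.  For Hermitian H, lambda1 is the maximum of the
  Rayleigh quotient f*Hf / f*f: the maximum exists by compactness of the unit sphere and a
  maximiser is an eigenvector.  This gives lambda1 <= rho.  Conversely rho = |lambda| for a real
  eigenvalue lambda with eigenvector f.  If lambda < 0, summing the entrywise inequality
  Re(h u) + Re(h conj(u)) + 2 |u| Re h >= 0 (valid for Re h >= 0) over u = conj(f_s) f_t gives
  -f*Hf <= conj(f)* H conj(f) + 2 |f|* H |f| <= 3 lambda1 f*f, hence |lambda| <= 3 lambda1.
*)

(* Vectors of C^n are functions nat => complex of which only the values below n matter; on
   the whole function space the product topology makes the unit sphere compact. *)

definition cinner :: "nat \<Rightarrow> (nat \<Rightarrow> complex) \<Rightarrow> (nat \<Rightarrow> complex) \<Rightarrow> complex" where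
  "cinner n f g = (\<Sum>s<n. cnj (f s) * g s)"

definition sqnorm :: "nat \<Rightarrow> (nat \<Rightarrow> complex) \<Rightarrow> real" where
  "sqnorm n f = (\<Sum>s<n. (cmod (f s))\<^sup>2)"

definition mat_app :: "nat \<Rightarrow> complex mat \<Rightarrow> (nat \<Rightarrow> complex) \<Rightarrow> nat \<Rightarrow> complex" where
  "mat_app n H f s = (\<Sum>t<n. H $$ (s, t) * f t)"

definition quad_form :: "nat \<Rightarrow> complex mat \<Rightarrow> (nat \<Rightarrow> complex) \<Rightarrow> real" where
  "quad_form n H f = Re (cinner n f (mat_app n H f))"

definition hermitian :: "nat \<Rightarrow> complex mat \<Rightarrow> bool" where
  "hermitian n H \<longleftrightarrow> (\<forall>s<n. \<forall>t<n. H $$ (t, s) = cnj (H $$ (s, t)))"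

lemma cinner_self: "cinner n f f = complex_of_real (sqnorm n f)"
  unfolding cinner_def sqnorm_def of_real_sum
  by (intro sum.cong refl) (metis complex_norm_square mult.commute)

lemma sqnorm_nonneg: "sqnorm n f \<ge> 0"
  unfolding sqnorm_def by (simp add: sum_nonneg)

lemma sqnorm_eq_0_iff: "sqnorm n f = 0 \<longleftrightarrow> (\<forall>s<n. f s = 0)"
  unfolding sqnorm_def by (subst sum_nonneg_eq_0_iff) auto

lemma sqnorm_pos_iff: "sqnorm n f > 0 \<longleftrightarrow> (\<exists>s<n. f s \<noteq> 0)"
  using sqnorm_nonneg[of n f] sqnorm_eq_0_iff[of n f] by auto

lemma norm_le_sqnorm: "i < n \<Longrightarrow> (cmod (f i))\<^sup>2 \<le> sqnorm n f"
  unfolding sqnorm_def by (intro member_le_sum) auto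

lemma sqnorm_cong: "(\<And>i. i < n \<Longrightarrow> f i = g i) \<Longrightarrow> sqnorm n f = sqnorm n g"
  unfolding sqnorm_def by (intro sum.cong) auto

lemma sqnorm_scale: "sqnorm n (\<lambda>i. c * f i) = (cmod c)\<^sup>2 * sqnorm n f"
  unfolding sqnorm_def by (simp add: sum_distrib_left norm_mult power_mult_distrib)

lemma cinner_commute: "cinner n g f = cnj (cinner n f g)"
  unfolding cinner_def by (simp add: mult.commute)

lemma cinner_add_left: "cinner n (\<lambda>i. f i + g i) h = cinner n f h + cinner n g h"
  unfolding cinner_def by (simp add: sum.distrib distrib_right)

lemma cinner_add_right: "cinner n h (\<lambda>i. f i + g i) = cinner n h f + cinner n h g"
  unfolding cinner_def by (simp add: sum.distrib distrib_left)

lemma cinner_scale_left: "cinner n (\<lambda>i. c * f i) g = cnj c * cinner n f g"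
  unfolding cinner_def by (simp add: sum_distrib_left mult.assoc)

lemma cinner_scale_right: "cinner n f (\<lambda>i. c * g i) = c * cinner n f g"
  unfolding cinner_def by (simp add: sum_distrib_left mult.left_commute)

lemma mat_app_add: "mat_app n H (\<lambda>i. f i + g i) s = mat_app n H f s + mat_app n H g s"
  unfolding mat_app_def by (simp add: sum.distrib distrib_left)

lemma mat_app_scale: "mat_app n H (\<lambda>i. c * f i) s = c * mat_app n H f s"
  unfolding mat_app_def by (simp add: sum_distrib_left mult.left_commute)

lemma hermitian_cnj:
  "hermitian n H \<Longrightarrow> s < n \<Longrightarrow> t < n \<Longrightarrow> cnj (H $$ (t, s)) = H $$ (s, t)"
  unfolding hermitian_def by metis

lemma hermitian_adjoint:
  assumes "hermitian n H"
  shows "cinner n f (mat_app n H g) = cinner n (mat_app n H f) g"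
proof -
  have "cinner n f (mat_app n H g) = (\<Sum>s<n. \<Sum>t<n. cnj (f s) * (H $$ (s, t) * g t))"
    unfolding cinner_def mat_app_def by (simp add: sum_distrib_left)
  also have "\<dots> = (\<Sum>t<n. \<Sum>s<n. cnj (f s) * (H $$ (s, t) * g t))"
    by (rule sum.swap)
  also have "\<dots> = (\<Sum>t<n. \<Sum>s<n. cnj (H $$ (t, s) * f s) * g t)"
    using assms by (intro sum.cong refl) (simp add: hermitian_cnj)
  also have "\<dots> = cinner n (mat_app n H f) g"
    unfolding cinner_def mat_app_def by (simp add: sum_distrib_right)
  finally show ?thesis .
qed

lemma hermitian_cinner_mat_app_real:
  assumes "hermitian n H"
  shows "cinner n f (mat_app n H f) = complex_of_real (quad_form n H f)"
  using hermitian_adjoint[OF assms, of f f] cinner_commute[of n f "mat_app n H f"]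
  unfolding quad_form_def by (simp add: complex_eq_iff)

lemma quad_form_scale: "quad_form n H (\<lambda>i. c * f i) = (cmod c)\<^sup>2 * quad_form n H f"
proof -
  have "cnj c * c = complex_of_real ((cmod c)\<^sup>2)"
    by (metis complex_norm_square mult.commute)
  then show ?thesis
    unfolding quad_form_def mat_app_scale cinner_scale_left cinner_scale_right
    by (simp add: mult.assoc[symmetric])
qed

lemma quad_form_cong: "(\<And>i. i < n \<Longrightarrow> f i = g i) \<Longrightarrow> quad_form n H f = quad_form n H g"
  unfolding quad_form_def cinner_def mat_app_def by (intro arg_cong[of _ _ Re] sum.cong) auto

lemma continuous_on_sqnorm: "continuous_on S (sqnorm n)"
  unfolding sqnorm_def
  by (intro continuous_on_sum continuous_on_power continuous_on_norm
      continuous_on_subset[OF continuous_on_product_coordinates] subset_UNIV)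

lemma continuous_on_quad_form: "continuous_on S (quad_form n H)"
  unfolding quad_form_def cinner_def mat_app_def
  by (intro continuous_on_Re continuous_on_sum continuous_on_mult continuous_on_cnj
      continuous_on_const continuous_on_subset[OF continuous_on_product_coordinates] subset_UNIV)

lemma compact_unit_sphere:
  "compact ({f :: nat \<Rightarrow> complex. \<forall>i. f i \<in> cball 0 1} \<inter> {f. sqnorm n f = 1})"
proof (rule compact_Int_closed)
  have "compactin (product_topology (\<lambda>_. euclidean) UNIV) (PiE UNIV (\<lambda>_::nat. cball (0::complex) 1))"
    by (subst compactin_PiE) auto
  moreover have "PiE UNIV (\<lambda>_::nat. cball (0::complex) 1) = {f. \<forall>i. f i \<in> cball 0 1}"
    by (auto simp: PiE_UNIV_domain Pi_def)
  ultimately show "compact {f :: nat \<Rightarrow> complex. \<forall>i. f i \<in> cball 0 1}"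
    by (simp add: euclidean_product_topology)
  show "closed {f. sqnorm n f = 1}"
    by (intro closed_Collect_eq continuous_on_sqnorm continuous_on_const)
qed

lemma quad_form_le_by_homogeneity:
  assumes "\<And>g. sqnorm n g = 1 \<Longrightarrow> \<forall>i. cmod (g i) \<le> 1 \<Longrightarrow> quad_form n H g \<le> M"
  shows "quad_form n H f \<le> M * sqnorm n f"
proof (cases "sqnorm n f = 0")
  case True
  then have "quad_form n H f = quad_form n H (\<lambda>_. 0)"
    by (intro quad_form_cong) (simp add: sqnorm_eq_0_iff)
  with True show ?thesis by (simp add: quad_form_def cinner_def)
next
  case False
  define c where "c = complex_of_real (1 / sqrt (sqnorm n f))"
  define g where "g i = (if i < n then c * f i else 0)" for i
  have norm_c: "(cmod c)\<^sup>2 = 1 / sqnorm n f"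
    using sqnorm_nonneg[of n f] unfolding c_def norm_of_real by (simp add: power_divide)
  have g_unit: "sqnorm n g = 1"
    using False by (simp add: sqnorm_cong[of n g "\<lambda>i. c * f i"] g_def sqnorm_scale norm_c)
  have "cmod (g i) \<le> 1" for i
    using norm_le_sqnorm[of i n g] by (auto simp: g_unit g_def abs_square_le_1)
  then have "quad_form n H g \<le> M"
    using assms g_unit by blast
  moreover have "quad_form n H g = quad_form n H f / sqnorm n f"
    by (simp add: quad_form_cong[of n g "\<lambda>i. c * f i"] g_def quad_form_scale norm_c)
  ultimately show ?thesis
    using False sqnorm_nonneg[of n f] by (simp add: field_simps)
qed

lemma quad_form_attains_max:
  assumes "n > 0"
  obtains x where "sqnorm n x = 1" and "\<And>f. quad_form n H f \<le> quad_form n H x * sqnorm n f"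
proof -
  let ?S = "{f :: nat \<Rightarrow> complex. \<forall>i. f i \<in> cball 0 1} \<inter> {f. sqnorm n f = 1}"
  have "(\<lambda>i. if i = 0 then 1 else 0) \<in> ?S"
    using assms by (simp add: sqnorm_def if_distrib[where f = "\<lambda>z. (cmod z)\<^sup>2"] cong: if_cong)
  then have nonempty: "?S \<noteq> {}"
    by (metis ex_in_conv)
  obtain x where x: "x \<in> ?S" and max: "\<And>g. g \<in> ?S \<Longrightarrow> quad_form n H g \<le> quad_form n H x"
    using continuous_attains_sup[OF compact_unit_sphere nonempty continuous_on_quad_form] by blast
  show ?thesis
  proof (rule that)
    show "sqnorm n x = 1"
      using x by simp
    show "quad_form n H f \<le> quad_form n H x * sqnorm n f" for f
      using max by (intro quad_form_le_by_homogeneity) simp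
  qed
qed

lemma le_0_if_linear_le_quadratic:
  fixes a b :: real
  assumes "\<And>t. t > 0 \<Longrightarrow> t * a \<le> t\<^sup>2 * b"
  shows "a \<le> 0"
proof (rule ccontr)
  assume "\<not> a \<le> 0"
  define t where "t = a / (\<bar>b\<bar> + 1)"
  have "t > 0"
    using \<open>\<not> a \<le> 0\<close> by (simp add: t_def add_pos_nonneg)
  then have "a \<le> t * b"
    using assms[of t] by (simp add: power2_eq_square mult.assoc)
  also have "\<dots> < a"
    using \<open>\<not> a \<le> 0\<close> by (simp add: t_def field_simps mult_strict_left_mono abs_if)
  finally show False
    by simp
qed

lemma rayleigh_maximizer_eigenvector:
  assumes herm: "hermitian n H"
    and bound: "\<And>f. quad_form n H f \<le> M * sqnorm n f"
    and attained: "quad_form n H x = M * sqnorm n x"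
    and "s < n"
  shows "mat_app n H x s = complex_of_real M * x s"
proof -
  define A where "A f = (\<lambda>s. mat_app n H f s - complex_of_real M * f s)" for f
  define d where "d = A x"
  have A_right: "cinner n f (A g) = cinner n f (mat_app n H g) - M * cinner n f g" for f g
    by (simp add: A_def cinner_def sum_subtractf right_diff_distrib sum_distrib_left mult.left_commute)
  have A_left: "cinner n (A f) g = cinner n (mat_app n H f) g - M * cinner n f g" for f g
    by (simp add: A_def cinner_def sum_subtractf left_diff_distrib sum_distrib_left mult.assoc)
  have A_adjoint: "cinner n f (A g) = cinner n (A f) g" for f g
    by (simp add: A_right A_left hermitian_adjoint[OF herm])
  have A_form: "Re (cinner n f (A f)) = quad_form n H f - M * sqnorm n f" for f
    by (simp add: A_right quad_form_def cinner_self)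
  \<comment> \<open>First variation: along \<open>x + t d\<close> the nonpositive form \<open>Re (cinner n f (A f))\<close>
     equals \<open>2 t |d|\<^sup>2 + O(t\<^sup>2)\<close>, forcing \<open>d = 0\<close>.\<close>
  have "t * (2 * sqnorm n d) \<le> t\<^sup>2 * (- Re (cinner n d (A d)))" if "t > 0" for t
  proof -
    define c where "c = complex_of_real t"
    define w where "w = (\<lambda>i. x i + c * d i)"
    have "mat_app n H x i = d i + complex_of_real M * x i" for i
      by (simp add: d_def A_def)
    then have "A w = (\<lambda>s. d s + c * A d s)"
      unfolding A_def w_def by (simp only: mat_app_add mat_app_scale) (simp add: algebra_simps)
    then have "cinner n w (A w) = cinner n (\<lambda>i. x i + c * d i) (\<lambda>s. d s + c * A d s)"
      by (simp add: w_def)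
    also have "\<dots> = cinner n x d + c * cinner n x (A d) + cnj c * cinner n d d
        + cnj c * c * cinner n d (A d)"
      by (simp only: cinner_add_left cinner_add_right cinner_scale_left cinner_scale_right)
        (simp add: algebra_simps)
    also have "cinner n x (A d) = cinner n d d"
      using A_adjoint[of x d] by (simp add: d_def)
    finally have "Re (cinner n w (A w))
        = Re (cinner n x (A x)) + 2 * t * sqnorm n d + t\<^sup>2 * Re (cinner n d (A d))"
      by (simp add: c_def d_def cinner_self power2_eq_square)
    moreover have "Re (cinner n w (A w)) \<le> 0" and "Re (cinner n x (A x)) = 0"
      using bound[of w] attained by (simp_all add: A_form)
    ultimately show ?thesis
      by (simp add: algebra_simps)
  qed
  then have "2 * sqnorm n d \<le> 0"
    by (rule le_0_if_linear_le_quadratic)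
  then have "d s = 0"
    using sqnorm_nonneg[of n d] sqnorm_eq_0_iff[of n d] \<open>s < n\<close> by simp
  then show ?thesis
    by (simp add: d_def A_def)
qed

lemma mult_mat_vec_vec_index:
  "H \<in> carrier_mat n n \<Longrightarrow> s < n \<Longrightarrow> vec_index (H *\<^sub>v Matrix.vec n f) s = mat_app n H f s"
  by (simp add: mat_app_def scalar_prod_def atLeast0LessThan)

lemma eigenvalue_iff_eigenfunction:
  assumes H: "H \<in> carrier_mat n n"
  shows "eigenvalue H \<mu> \<longleftrightarrow> (\<exists>f. sqnorm n f > 0 \<and> (\<forall>s<n. mat_app n H f s = \<mu> * f s))"
proof
  assume "eigenvalue H \<mu>"
  then obtain v where v: "v \<in> carrier_vec n" "v \<noteq> 0\<^sub>v n" "H *\<^sub>v v = \<mu> \<cdot>\<^sub>v v"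
    using H unfolding eigenvalue_def eigenvector_def by auto
  have "Matrix.vec n (vec_index v) = v"
    using v(1) by auto
  then have "mat_app n H (vec_index v) s = \<mu> * vec_index v s" if "s < n" for s
    using mult_mat_vec_vec_index[OF H that, of "vec_index v"] v that by simp
  moreover have "sqnorm n (vec_index v) > 0"
    using v(1,2) by (auto simp: sqnorm_pos_iff)
  ultimately show "\<exists>f. sqnorm n f > 0 \<and> (\<forall>s<n. mat_app n H f s = \<mu> * f s)"
    by blast
next
  assume "\<exists>f. sqnorm n f > 0 \<and> (\<forall>s<n. mat_app n H f s = \<mu> * f s)"
  then obtain f where f: "sqnorm n f > 0" "\<forall>s<n. mat_app n H f s = \<mu> * f s"
    by blast
  have "vec_index (H *\<^sub>v Matrix.vec n f) s = vec_index (\<mu> \<cdot>\<^sub>v Matrix.vec n f) s" if "s < n" for s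
    using mult_mat_vec_vec_index[OF H that] f(2) that by simp
  then have "H *\<^sub>v Matrix.vec n f = \<mu> \<cdot>\<^sub>v Matrix.vec n f"
    using H by (intro eq_vecI) auto
  moreover have "Matrix.vec n f \<in> carrier_vec n"
    by simp
  moreover have "Matrix.vec n f \<noteq> 0\<^sub>v n"
  proof -
    obtain s where "s < n" and "f s \<noteq> 0"
      using f(1) sqnorm_pos_iff by blast
    then have "vec_index (Matrix.vec n f) s \<noteq> vec_index (0\<^sub>v n) s"
      by simp
    then show ?thesis
      by metis
  qed
  ultimately show "eigenvalue H \<mu>"
    using H unfolding eigenvalue_def eigenvector_def by (intro exI[of _ "Matrix.vec n f"]) auto
qed

lemma hermitian_eigenvalue_rayleigh_quotient:
  assumes herm: "hermitian n H"
    and f: "sqnorm n f > 0" "\<forall>s<n. mat_app n H f s = \<mu> * f s"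
  shows "\<mu> = complex_of_real (quad_form n H f / sqnorm n f)"
proof -
  have "complex_of_real (quad_form n H f) = cinner n f (\<lambda>s. \<mu> * f s)"
    using f(2) by (simp add: hermitian_cinner_mat_app_real[OF herm, symmetric] cinner_def)
  also have "\<dots> = \<mu> * complex_of_real (sqnorm n f)"
    by (simp add: cinner_scale_right cinner_self)
  finally show ?thesis
    using f(1) by (simp add: field_simps)
qed

lemma finite_real_eigenvalues:
  "H \<in> carrier_mat n n \<Longrightarrow> finite {r. eigenvalue H (complex_of_real r)}"
  using finite_vimageI[OF card_finite_spectrum(1) inj_of_real] by (simp add: spectrum_def vimage_def)

lemma lambda1_eqI:
  assumes "H \<in> carrier_mat n n" and "eigenvalue H (complex_of_real M)"
    and "\<And>r. eigenvalue H (complex_of_real r) \<Longrightarrow> r \<le> M"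
  shows "lambda1 H = M"
  unfolding lambda1_def using assms by (intro Max_eqI finite_real_eigenvalues) auto

lemma hermitian_lambda1:
  assumes H: "H \<in> carrier_mat n n" and "n > 0" and herm: "hermitian n H"
  shows "eigenvalue H (complex_of_real (lambda1 H))"
    and "quad_form n H f \<le> lambda1 H * sqnorm n f"
proof -
  obtain x where x: "sqnorm n x = 1"
    and max: "\<And>f. quad_form n H f \<le> quad_form n H x * sqnorm n f"
    using quad_form_attains_max[OF \<open>n > 0\<close>] by blast
  define M where "M = quad_form n H x"
  have "eigenvalue H (complex_of_real M)"
    unfolding eigenvalue_iff_eigenfunction[OF H]
    using x rayleigh_maximizer_eigenvector[OF herm max, of x] by (intro exI[of _ x]) (simp add: M_def)
  moreover have "r \<le> M" if eig: "eigenvalue H (complex_of_real r)" for r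
  proof -
    obtain f where f: "sqnorm n f > 0" "\<forall>s<n. mat_app n H f s = complex_of_real r * f s"
      using eig unfolding eigenvalue_iff_eigenfunction[OF H] by blast
    then have "r = quad_form n H f / sqnorm n f"
      using hermitian_eigenvalue_rayleigh_quotient[OF herm f] of_real_eq_iff by blast
    then show "r \<le> M"
      using max[of f] f(1) by (simp add: M_def pos_divide_le_eq)
  qed
  ultimately have "lambda1 H = M"
    by (rule lambda1_eqI[OF H])
  then show "eigenvalue H (complex_of_real (lambda1 H))"
    and "quad_form n H f \<le> lambda1 H * sqnorm n f"
    using \<open>eigenvalue H (complex_of_real M)\<close> max[of f] by (simp_all add: M_def)
qed

lemma lambda1_le_spectral_radius:
  assumes H: "H \<in> carrier_mat n n" and "n > 0" and "hermitian n H"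
  shows "lambda1 H \<le> spectral_radius H"
proof -
  have "complex_of_real (lambda1 H) \<in> spectrum H"
    using hermitian_lambda1(1)[OF assms] by (simp add: spectrum_def)
  then have "cmod (complex_of_real (lambda1 H)) \<le> spectral_radius H"
    by (intro spectral_radius_mem_max(2)[OF H \<open>n > 0\<close>] imageI)
  then show ?thesis
    by (simp add: abs_le_iff)
qed

lemma neg_quad_form_le_conj_abs:
  assumes "\<forall>s<n. \<forall>t<n. Re (H $$ (s, t)) \<ge> 0"
  shows "- quad_form n H f
    \<le> quad_form n H (\<lambda>i. cnj (f i)) + 2 * quad_form n H (\<lambda>i. complex_of_real (cmod (f i)))"
proof -
  have entry: "0 \<le> Re (cnj p * h * q) + Re (p * h * cnj q) + 2 * (cmod p * Re h * cmod q)"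
    if "Re h \<ge> 0" for p q h :: complex
  proof -
    define u where "u = cnj p * q"
    have "Re (cnj p * h * q) + Re (p * h * cnj q) + 2 * (cmod p * Re h * cmod q)
        = 2 * (Re h * (Re u + cmod u))"
      by (simp add: u_def norm_mult algebra_simps)
    moreover have "0 \<le> Re h * (Re u + cmod u)"
      using that abs_Re_le_cmod[of u] by (intro mult_nonneg_nonneg) linarith+
    ultimately show ?thesis
      by linarith
  qed
  have expand: "quad_form n H g = (\<Sum>s<n. \<Sum>t<n. Re (cnj (g s) * H $$ (s, t) * g t))" for g
    by (simp add: quad_form_def cinner_def mat_app_def sum_distrib_left mult.assoc)
  have "0 \<le> (\<Sum>s<n. \<Sum>t<n. Re (cnj (f s) * H $$ (s, t) * f t) + Re (f s * H $$ (s, t) * cnj (f t))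
      + 2 * (cmod (f s) * Re (H $$ (s, t)) * cmod (f t)))"
    using assms entry by (intro sum_nonneg) auto
  then show ?thesis
    by (simp add: expand sum.distrib sum_distrib_left mult.commute mult.left_commute)
qed

lemma spectral_radius_le_three_lambda1:
  assumes H: "H \<in> carrier_mat n n" and "n > 0" and herm: "hermitian n H"
    and nonneg: "\<forall>s<n. \<forall>t<n. Re (H $$ (s, t)) \<ge> 0"
  shows "spectral_radius H \<le> 3 * lambda1 H"
proof -
  obtain \<mu> where "eigenvalue H \<mu>" and rho: "spectral_radius H = cmod \<mu>"
    using spectral_radius_mem_max(1)[OF H \<open>n > 0\<close>] by (auto simp: spectrum_def)
  then obtain f where f: "sqnorm n f > 0" "\<forall>s<n. mat_app n H f s = \<mu> * f s"
    unfolding eigenvalue_iff_eigenfunction[OF H] by blast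
  define r where "r = quad_form n H f / sqnorm n f"
  have \<mu>: "\<mu> = complex_of_real r"
    using hermitian_eigenvalue_rayleigh_quotient[OF herm f] by (simp add: r_def)
  have quad_f: "quad_form n H f = r * sqnorm n f"
    using f(1) by (simp add: r_def)
  note rayleigh = hermitian_lambda1(2)[OF H \<open>n > 0\<close> herm]
  have "r * sqnorm n f \<le> lambda1 H * sqnorm n f"
    using rayleigh[of f] by (simp add: quad_f)
  then have "r \<le> lambda1 H"
    using f(1) by (rule mult_right_le_imp_le)
  have "(- r) * sqnorm n f \<le> (3 * lambda1 H) * sqnorm n f"
  proof -
    have "- r * sqnorm n f
        \<le> quad_form n H (\<lambda>i. cnj (f i)) + 2 * quad_form n H (\<lambda>i. complex_of_real (cmod (f i)))"
      using neg_quad_form_le_conj_abs[OF nonneg, of f] by (simp add: quad_f)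
    also have "\<dots> \<le> lambda1 H * sqnorm n (\<lambda>i. cnj (f i))
        + 2 * (lambda1 H * sqnorm n (\<lambda>i. complex_of_real (cmod (f i))))"
      using rayleigh by (intro add_mono mult_left_mono) auto
    also have "\<dots> = 3 * lambda1 H * sqnorm n f"
      by (simp add: sqnorm_def)
    finally show ?thesis .
  qed
  then have "- r \<le> 3 * lambda1 H"
    using f(1) by (rule mult_right_le_imp_le)
  then show ?thesis
    using rho \<open>r \<le> lambda1 H\<close> by (simp add: \<mu>)
qed

lemma herm_adj_k_carrier: "herm_adj_k k n E \<in> carrier_mat n n"
  by (simp add: herm_adj_k_def)

lemma hermitian_herm_adj_k: "hermitian n (herm_adj_k k n E)"
  by (auto simp: hermitian_def herm_adj_k_def cis_cnj)

lemma herm_adj_k_Re_nonneg: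
  assumes "k \<ge> 1"
  shows "\<forall>s<n. \<forall>t<n. Re (herm_adj_k k n E $$ (s, t)) \<ge> 0"
proof -
  have "pi / real (k + 1) \<le> pi / 2"
    using assms by (intro divide_left_mono) auto
  moreover have "0 < pi / real (k + 1)"
    by simp
  ultimately have "cos (pi / real (k + 1)) \<ge> 0"
    by (intro cos_ge_zero) linarith+
  then show ?thesis
    by (simp add: herm_adj_k_def)
qed

theorem theorem5p4:
  fixes n k :: nat and E :: "nat \<Rightarrow> nat \<Rightarrow> bool"
  assumes "digraph n E" and "weakly_connected n E" and "k \<ge> 1"
  shows "lambda1 (herm_adj_k k n E) \<le> spectral_radius (herm_adj_k k n E)
       \<and> spectral_radius (herm_adj_k k n E) \<le> 3 * lambda1 (herm_adj_k k n E)"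
proof -
  \<comment> \<open>The hypotheses on \<open>X\<close> are needed only for \<open>n > 0\<close>.\<close>
  have "n > 0"
    using assms(2) unfolding weakly_connected_def by simp
  then show ?thesis
    using lambda1_le_spectral_radius[OF herm_adj_k_carrier _ hermitian_herm_adj_k]
      spectral_radius_le_three_lambda1[OF herm_adj_k_carrier _ hermitian_herm_adj_k
        herm_adj_k_Re_nonneg[OF assms(3)]]
    by blast
qed

end
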